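(* Let $k \ge 1$. The number of odd Grassmannian permutations (of any size $m\ge 0$) that avoid $\operatorname{id}_k = 12\cdots k$ is \[ \frac{C_{k+1}}{2} - 2C_{(k+1)/2} + 1 \quad\text{if $k$ is odd},\qquad \frac{C_{k+1} - C_{k/2}}{2} - C_{(k+2)/2} + 1 \quad\text{if $k$ is even}, \] where $C_n = \frac{1}{n+1}\binom{2n}{n}$.
   Context: A permutation is Grassmannian if it has at most one descent; it is odd if it has an odd number of inversions (pairs $i<j$ with $\pi_i>\pi_j$). A permutation avoids $12\cdots k$ if it has no increasing subsequence of length $k$. *)

theory Defs
  imports Complex_Main "HOL-Library.Sublist"
begin

definition is_perm :: "nat list \<Rightarrow> bool" where
  "is_perm p \<longleftrightarrow> distinct p \<and> set p = {1..length p}"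

definition descents :: "nat list \<Rightarrow> nat set" where
  "descents p = {i. Suc i < length p \<and> p ! i > p ! Suc i}"

definition grassmannian :: "nat list \<Rightarrow> bool" where
  "grassmannian p \<longleftrightarrow> card (descents p) \<le> 1"

definition inversions :: "nat list \<Rightarrow> (nat \<times> nat) set" where
  "inversions p = {(i, j). i < j \<and> j < length p \<and> p ! i > p ! j}"

definition odd_perm :: "nat list \<Rightarrow> bool" where
  "odd_perm p \<longleftrightarrow> odd (card (inversions p))"

definition avoids_id :: "nat \<Rightarrow> nat list \<Rightarrow> bool" where
  "avoids_id k p \<longleftrightarrow> \<not> (\<exists>xs. subseq xs p \<and> length xs = k \<and> sorted_wrt (<) xs)"

definition catalan :: "nat \<Rightarrow> rat" where
  "catalan n = of_nat ((2 * n) choose n) / of_nat (n + 1)"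

end

theory Submission
  imports Defs
begin

text \<open>A Grassmannian permutation of \<open>{1..m}\<close> lists a set \<open>A\<close> increasingly, followed by its
  complement \<open>B\<close>; it is encoded by the word \<open>w\<close> with \<open>w\<^sub>j \<longleftrightarrow> j \<in> A\<close>, and words with an inversion
  encode distinct permutations. The inversions are the pairs \<open>j < j'\<close> with \<open>j \<in> B\<close>,
  \<open>j' \<in> A\<close>, and an increasing subsequence takes its entries below some threshold from \<open>A\<close> and
  the others from \<open>B\<close>, so both statistics are recursive in the first letter of \<open>w\<close>.

  The odd permutations number \<open>(N - S) / 2\<close>, where \<open>N\<close> counts the words whose longest
  increasing subsequence is shorter than \<open>k\<close> and \<open>S\<close> sums \<open>(-1)^inv\<close> over them. Graded by \<open>|B|\<close>, the count and the sign
  sum (together with a twisted sign sum) obey first-letter recurrences solved by ballot numbers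
  \<open>C(l+z, z) - C(l+z, z-1)\<close>; summing over the grading leaves Catalan numbers.\<close>

section \<open>Ballot numbers\<close>

definition ballot :: "nat \<Rightarrow> nat \<Rightarrow> int" where
  "ballot l z = int ((l + z) choose z) - (if z = 0 then 0 else int ((l + z) choose (z - 1)))"

lemma ballot_0 [simp]: "ballot l 0 = 1"
  by (simp add: ballot_def)

lemma ballot_Suc_0 [simp]: "ballot l (Suc 0) = int l"
  by (simp add: ballot_def)

lemma ballot_Suc_Suc: "ballot (Suc l) (Suc j) = ballot l (Suc j) + ballot (Suc l) j"
proof (cases j)
  case 0
  then show ?thesis by (simp add: ballot_def)
next
  case (Suc j')
  have "(Suc l + Suc j) choose Suc j = ((l + Suc j) choose Suc j) + ((l + Suc j) choose j)"
    and "(Suc l + Suc j) choose j = ((l + Suc j) choose j) + ((l + Suc j) choose j')"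
    using Suc by (simp_all add: add.commute)
  with Suc show ?thesis by (simp add: ballot_def)
qed

lemma ballot_Suc_diag [simp]: "ballot l (Suc l) = 0"
  using binomial_symmetric[of l "l + Suc l"] by (simp add: ballot_def)

lemma sum_ballot: "(\<Sum>z\<le>j. ballot l z) = ballot (Suc l) j"
  by (induction j) (simp_all add: ballot_Suc_Suc)

lemma sum_ballot_diag: "(\<Sum>z\<le>l. ballot l z) = ballot (Suc l) (Suc l)"
  using sum_ballot[of l l] ballot_Suc_Suc[of l l] by simp

lemma sum_ballot_diag_Suc: "(\<Sum>z\<le>l. ballot l (Suc z)) = ballot (Suc l) (Suc l) - 1"
proof -
  have "(\<Sum>z\<le>Suc l. ballot l z) = ballot l 0 + (\<Sum>z\<le>l. ballot l (Suc z))"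
    by (subst sum.atMost_Suc_shift) simp
  then show ?thesis
    using sum_ballot[of l "Suc l"] ballot_Suc_Suc[of l l] by simp
qed

lemma catalan_eq_ballot: "catalan m = of_int (ballot m m)"
proof (cases m)
  case 0
  then show ?thesis by (simp add: catalan_def ballot_def)
next
  case (Suc m')
  define c0 where "c0 = (2*m) choose m"
  define c1 where "c1 = (2*m) choose m'"
  have "(2*m - m') * ((2*m) choose m') = Suc m' * ((2*m) choose Suc m')"
    using binomial_absorb_comp[of "2*m" m'] binomial_absorption[of m' "2*m"] by simp
  then have "(m + 1) * c1 = m * c0"
    using Suc unfolding c0_def c1_def by (simp add: algebra_simps)
  then have "(of_nat (m + 1) :: rat) * of_nat c1 = of_nat m * of_nat c0"
    by (metis of_nat_mult)
  then have "catalan m = of_nat c0 - of_nat c1"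
    unfolding catalan_def c0_def [symmetric] by (simp add: field_simps)
  moreover have "ballot m m = int c0 - int c1"
    unfolding ballot_def c0_def c1_def using Suc by (simp add: mult_2)
  ultimately show ?thesis by simp
qed

lemma sum_atMost_double:
  "(\<Sum>i\<le>2*l. f i) = (\<Sum>j\<le>l. f (2*j)) + (\<Sum>j<l. f (Suc (2*j)))"
proof (induction l)
  case (Suc l)
  have "(\<Sum>i\<le>2 * Suc l. f i) = (\<Sum>i\<le>2*l. f i) + f (Suc (2*l)) + f (2 * Suc l)"
    by (simp add: add.commute)
  with Suc show ?case by (simp add: ac_simps)
qed simp

lemma sum_atMost_Suc_double:
  "(\<Sum>i\<le>Suc (2*l). f i) = (\<Sum>j\<le>l. f (2*j)) + (\<Sum>j\<le>l. f (Suc (2*j)))"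
  using sum_atMost_double[of f l] by (simp add: lessThan_Suc_atMost [symmetric] ac_simps)

section \<open>Closed forms of the word sums\<close>

text \<open>Split by the parities of the number \<open>Z\<close> of letters \<open>False\<close> and of the bound \<open>n\<close>,
  these formulas were found by solving the first-letter recurrences of the next section and are
  verified only through them.\<close>

definition count_formula :: "nat \<Rightarrow> nat \<Rightarrow> int" where
  "count_formula z l = ballot l (Suc z) + ballot (Suc l) z"

definition sign_formula :: "nat \<Rightarrow> nat \<Rightarrow> int" where
  "sign_formula Z n =
    (if even Z then
       (if even n then ballot (n div 2) (Z div 2) + 2 * ballot (n div 2) (Suc (Z div 2))
        else 2 * count_formula (Z div 2) (n div 2))
     else (if n div 2 = 0 then 0 else count_formula (Z div 2) (n div 2 - 1)))"

definition twisted_formula :: "nat \<Rightarrow> nat \<Rightarrow> int" where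
  "twisted_formula Z n =
    (if even Z then (if even n then ballot (n div 2) (Z div 2) else 0)
     else if even n then ballot (n div 2) (Suc (Z div 2))
     else ballot (Suc (n div 2)) (Z div 2) + ballot (Suc (n div 2)) (Suc (Z div 2)))"

lemma count_formula_0 [simp]: "count_formula 0 l = int l + 1"
  by (simp add: count_formula_def)

lemma count_formula_Suc_diag: "count_formula (Suc l) l = 0"
  using binomial_symmetric[of l "l + Suc (Suc l)"] by (simp add: count_formula_def ballot_def)

lemma sign_formula_simps:
  "sign_formula (2*z) (2*l) = ballot l z + 2 * ballot l (Suc z)"
  "sign_formula (2*z) (Suc (2*l)) = 2 * count_formula z l"
  "sign_formula (Suc (2*z)) 0 = 0"
  "sign_formula (Suc (2*z)) (Suc 0) = 0"
  "sign_formula (Suc (2*z)) (2 * Suc l) = count_formula z l"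
  "sign_formula (Suc (2*z)) (Suc (2 * Suc l)) = count_formula z l"
  by (simp_all add: sign_formula_def)

lemma twisted_formula_simps:
  "twisted_formula (2*z) (2*l) = ballot l z"
  "twisted_formula (2*z) (Suc (2*l)) = 0"
  "twisted_formula (Suc (2*z)) (2*l) = ballot l (Suc z)"
  "twisted_formula (Suc (2*z)) (Suc (2*l)) = ballot (Suc l) z + ballot (Suc l) (Suc z)"
  by (simp_all add: twisted_formula_def)

lemma formulas_rec_even_even:
  assumes "z \<le> l"
  shows "sign_formula (2*z) (2*l) = (if z = 0 then 1 else 0)
           + (if z < l then sign_formula (2*z) (2*l - 1) else 0)
           + (if 0 < z then twisted_formula (2*z - 1) (2*l) else 0)
       \<and> twisted_formula (2*z) (2*l) = (if z = 0 then 1 else 0)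
           - (if z < l then twisted_formula (2*z) (2*l - 1) else 0)
           + (if 0 < z then sign_formula (2*z - 1) (2*l) else 0)"
proof (cases z)
  case 0
  then show ?thesis
  proof (cases l)
    case (Suc l')
    with \<open>z = 0\<close> show ?thesis
      using sign_formula_simps(1)[of 0 l] sign_formula_simps(2)[of 0 l']
        twisted_formula_simps(1)[of 0 l] twisted_formula_simps(2)[of 0 l']
      by simp
  qed (simp add: sign_formula_def twisted_formula_def)
next
  case (Suc z')
  then obtain l' where l: "l = Suc l'"
    using assms by (cases l) auto
  show ?thesis
  proof (cases "z < l")
    case True
    with Suc l show ?thesis
      using sign_formula_simps(1)[of z l] sign_formula_simps(2)[of z l'] sign_formula_simps(5)[of z' l']
        twisted_formula_simps(1)[of z l] twisted_formula_simps(2)[of z l'] twisted_formula_simps(3)[of z' l]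
        ballot_Suc_Suc[of l' z] ballot_Suc_Suc[of l' z']
      by (simp add: count_formula_def)
  next
    case False
    with assms have "z = l"
      by simp
    with Suc l show ?thesis
      using sign_formula_simps(1)[of z l] sign_formula_simps(5)[of z' l']
        twisted_formula_simps(1)[of z l] twisted_formula_simps(3)[of z' l] ballot_Suc_Suc[of l' z']
      by (simp add: count_formula_def)
  qed
qed

lemma formulas_rec_even_odd:
  assumes "z \<le> l"
  shows "sign_formula (2*z) (Suc (2*l)) = (if z = 0 then 1 else 0)
           + sign_formula (2*z) (2*l)
           + (if 0 < z then twisted_formula (2*z - 1) (Suc (2*l)) else 0)
       \<and> twisted_formula (2*z) (Suc (2*l)) = (if z = 0 then 1 else 0)
           - twisted_formula (2*z) (2*l)
           + (if 0 < z then sign_formula (2*z - 1) (Suc (2*l)) else 0)"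
proof (cases z)
  case 0
  then show ?thesis
    using sign_formula_simps(1)[of 0 l] sign_formula_simps(2)[of 0 l]
      twisted_formula_simps(1)[of 0 l] twisted_formula_simps(2)[of 0 l]
    by simp
next
  case (Suc z')
  then obtain l' where l: "l = Suc l'"
    using assms by (cases l) auto
  with Suc show ?thesis
    using sign_formula_simps(1)[of z l] sign_formula_simps(2)[of z l] sign_formula_simps(6)[of z' l']
      twisted_formula_simps(1)[of z l] twisted_formula_simps(2)[of z l] twisted_formula_simps(4)[of z' l]
      ballot_Suc_Suc[of l z'] ballot_Suc_Suc[of l' z']
    by (simp add: count_formula_def)
qed

lemma formulas_rec_odd_even:
  assumes "z < l"
  shows "sign_formula (Suc (2*z)) (2*l)
           = sign_formula (Suc (2*z)) (2*l - 1) + twisted_formula (2*z) (2*l)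
       \<and> twisted_formula (Suc (2*z)) (2*l)
           = - twisted_formula (Suc (2*z)) (2*l - 1) + sign_formula (2*z) (2*l)"
proof -
  obtain l' where l: "l = Suc l'"
    using assms by (cases l) auto
  show ?thesis
  proof (cases l')
    case 0
    with assms l have "z = 0"
      by simp
    with l 0 show ?thesis
      using sign_formula_simps(1)[of 0 1] sign_formula_simps(4)[of 0] sign_formula_simps(5)[of 0 0]
        twisted_formula_simps(1)[of 0 1] twisted_formula_simps(3)[of 0 1] twisted_formula_simps(4)[of 0 0]
      by (simp add: count_formula_def ballot_def)
  next
    case (Suc l'')
    with l show ?thesis
      using sign_formula_simps(1)[of z l] sign_formula_simps(5)[of z l'] sign_formula_simps(6)[of z l'']
        twisted_formula_simps(1)[of z l] twisted_formula_simps(3)[of z l] twisted_formula_simps(4)[of z l']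
        ballot_Suc_Suc[of l'' z]
      by (simp add: count_formula_def)
  qed
qed

lemma formulas_rec_odd_odd:
  assumes "z \<le> l"
  shows "sign_formula (Suc (2*z)) (Suc (2*l))
           = (if z < l then sign_formula (Suc (2*z)) (2*l) else 0) + twisted_formula (2*z) (Suc (2*l))
       \<and> twisted_formula (Suc (2*z)) (Suc (2*l))
           = - (if z < l then twisted_formula (Suc (2*z)) (2*l) else 0) + sign_formula (2*z) (Suc (2*l))"
proof (cases "z < l")
  case True
  then obtain l' where l: "l = Suc l'"
    by (cases l) auto
  with True show ?thesis
    using sign_formula_simps(2)[of z l] sign_formula_simps(5)[of z l'] sign_formula_simps(6)[of z l']
      twisted_formula_simps(2)[of z l] twisted_formula_simps(3)[of z l] twisted_formula_simps(4)[of z l]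
      ballot_Suc_Suc[of l z]
    by (simp add: count_formula_def)
next
  case False
  with assms have zl: "z = l"
    by simp
  show ?thesis
  proof (cases l)
    case 0
    with zl show ?thesis
      using sign_formula_simps(2)[of 0 0] sign_formula_simps(4)[of 0]
        twisted_formula_simps(2)[of 0 0] twisted_formula_simps(4)[of 0 0]
      by (simp add: count_formula_def ballot_def)
  next
    case (Suc l')
    with zl show ?thesis
      using sign_formula_simps(2)[of l l] sign_formula_simps(6)[of l l'] count_formula_Suc_diag[of l']
        twisted_formula_simps(2)[of l l] twisted_formula_simps(4)[of l l] ballot_Suc_Suc[of l l]
      by (simp add: count_formula_def)
  qed
qed

lemma count_formula_rec:
  assumes "Z \<le> n"
  shows "count_formula Z n = (if Z = 0 then 1 else 0)
    + (if 0 < n \<and> Z < n then count_formula Z (n - 1) else 0)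
    + (if 0 < Z then count_formula (Z - 1) n else 0)"
proof (cases Z)
  case 0
  then show ?thesis
    by (cases n) auto
next
  case (Suc Z')
  then obtain n' where n: "n = Suc n'"
    using assms by (cases n) auto
  show ?thesis
  proof (cases "Z < n")
    case True
    with Suc n show ?thesis
      using ballot_Suc_Suc[of n' Z] ballot_Suc_Suc[of n Z'] by (simp add: count_formula_def)
  next
    case False
    with assms have "Z = n"
      by simp
    with Suc n show ?thesis
      using ballot_Suc_Suc[of n n'] by (simp add: count_formula_def)
  qed
qed

lemma formulas_rec:
  assumes "Z \<le> n"
  shows "sign_formula Z n = (if Z = 0 then 1 else 0)
           + (if 0 < n \<and> Z < n then sign_formula Z (n - 1) else 0)
           + (if 0 < Z then twisted_formula (Z - 1) n else 0)
       \<and> twisted_formula Z n = (if Z = 0 then 1 else 0)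
           - (if 0 < n \<and> Z < n then twisted_formula Z (n - 1) else 0)
           + (if 0 < Z then sign_formula (Z - 1) n else 0)"
proof -
  obtain z where "Z = 2*z \<or> Z = Suc (2*z)"
    by (metis evenE oddE Suc_eq_plus1)
  moreover obtain l where "n = 2*l \<or> n = Suc (2*l)"
    by (metis evenE oddE Suc_eq_plus1)
  ultimately consider "Z = 2*z" "n = 2*l" | "Z = 2*z" "n = Suc (2*l)"
    | "Z = Suc (2*z)" "n = 2*l" | "Z = Suc (2*z)" "n = Suc (2*l)"
    by blast
  then show ?thesis
  proof cases
    case 1
    with assms have "z \<le> l"
      by simp
    with 1 formulas_rec_even_even[of z l] show ?thesis
      by simp
  next
    case 2
    with assms have "z \<le> l"
      by simp
    with 2 formulas_rec_even_odd[of z l] show ?thesis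
      by simp
  next
    case 3
    with assms have "z < l"
      by simp
    with 3 formulas_rec_odd_even[of z l] show ?thesis
      by simp
  next
    case 4
    with assms have "z \<le> l"
      by simp
    with 4 formulas_rec_odd_odd[of z l] show ?thesis
      by simp
  qed
qed

lemma sum_count_formula: "(\<Sum>z\<le>l. count_formula z l) = ballot (Suc (Suc l)) (Suc (Suc l)) - 1"
proof -
  have "(\<Sum>z\<le>l. count_formula z l) = (\<Sum>z\<le>l. ballot l (Suc z)) + (\<Sum>z\<le>l. ballot (Suc l) z)"
    by (simp add: count_formula_def sum.distrib)
  then show ?thesis
    using sum_ballot_diag_Suc[of l] sum_ballot[of "Suc l" l] ballot_Suc_Suc[of "Suc l" "Suc l"]
      ballot_Suc_Suc[of "Suc l" l] by simp
qed

lemma sum_sign_formula_even: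
  "(\<Sum>Z\<le>2*l. sign_formula Z (2*l)) = 4 * ballot (Suc l) (Suc l) - 3"
proof (cases l)
  case 0
  then show ?thesis by (simp add: sign_formula_def ballot_def)
next
  case (Suc l')
  have "(\<Sum>Z\<le>2*l. sign_formula Z (2*l))
      = (\<Sum>z\<le>l. sign_formula (2*z) (2*l)) + (\<Sum>z<l. sign_formula (Suc (2*z)) (2*l))"
    by (rule sum_atMost_double)
  also have "\<dots> = (\<Sum>z\<le>l. ballot l z + 2 * ballot l (Suc z)) + (\<Sum>z<l. count_formula z l')"
    by (simp only: sign_formula_simps(1) Suc sign_formula_simps(5))
  also have "(\<Sum>z<l. count_formula z l') = (\<Sum>z\<le>l'. count_formula z l')"
    using Suc lessThan_Suc_atMost by simp
  finally show ?thesis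
    using sum_count_formula[of l'] sum_ballot_diag[of l] sum_ballot_diag_Suc[of l] Suc
    by (simp add: sum.distrib sum_distrib_left [symmetric])
qed

lemma sum_sign_formula_odd:
  "(\<Sum>Z\<le>Suc (2*l). sign_formula Z (Suc (2*l)))
    = ballot (Suc l) (Suc l) + 2 * ballot (Suc (Suc l)) (Suc (Suc l)) - 3"
proof (cases l)
  case 0
  then show ?thesis by (simp add: sign_formula_def ballot_def count_formula_def)
next
  case (Suc l')
  have "(\<Sum>Z\<le>Suc (2*l). sign_formula Z (Suc (2*l)))
      = (\<Sum>z\<le>l. sign_formula (2*z) (Suc (2*l))) + (\<Sum>z\<le>l. sign_formula (Suc (2*z)) (Suc (2*l)))"
    by (rule sum_atMost_Suc_double)
  also have "\<dots> = (\<Sum>z\<le>l. 2 * count_formula z l) + (\<Sum>z\<le>l. count_formula z l')"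
    by (simp only: sign_formula_simps(2) Suc sign_formula_simps(6))
  also have "(\<Sum>z\<le>l. count_formula z l') = (\<Sum>z\<le>l'. count_formula z l')"
    using Suc count_formula_Suc_diag[of l'] by simp
  finally show ?thesis
    using sum_count_formula[of l'] sum_count_formula[of l] Suc
    by (simp add: sum_distrib_left [symmetric])
qed

section \<open>Words with a bounded longest increasing subsequence\<close>

text \<open>A word \<open>w\<close> stands for the Grassmannian permutation that lists the positions of \<open>True\<close>
  in increasing order followed by the positions of \<open>False\<close> (\<open>grass_perm\<close> below);
  \<open>word_lis w\<close> and \<open>word_inversions w\<close> are its longest increasing subsequence and its number
  of inversions.\<close>

fun word_lis :: "bool list \<Rightarrow> nat" where
  "word_lis [] = 0"
| "word_lis (True # w) = Suc (word_lis w)"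
| "word_lis (False # w) = max (Suc (count_list w False)) (word_lis w)"

fun word_inversions :: "bool list \<Rightarrow> nat" where
  "word_inversions [] = 0"
| "word_inversions (True # w) = word_inversions w"
| "word_inversions (False # w) = count_list w True + word_inversions w"

lemma count_False_le_word_lis: "count_list w False \<le> word_lis w"
  by (induction w rule: word_lis.induct) auto

lemma count_True_le_word_lis: "count_list w True \<le> word_lis w"
  by (induction w rule: word_lis.induct) auto

lemma length_eq_count_True_False: "length w = count_list w True + count_list w False"
  by (induction w) auto

definition bounded_words :: "nat \<Rightarrow> nat \<Rightarrow> bool list set" where
  "bounded_words Z n = {w. count_list w False = Z \<and> word_lis w \<le> n}"

lemma finite_bounded_words: "finite (bounded_words Z n)"
proof -
  have "length w \<le> Z + n" if "w \<in> bounded_words Z n" for w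
    using that length_eq_count_True_False[of w] count_True_le_word_lis[of w]
    by (simp add: bounded_words_def)
  then have "bounded_words Z n \<subseteq> {w. set w \<subseteq> UNIV \<and> length w \<le> Z + n}"
    by auto
  then show ?thesis
    using finite_lists_length_le[of "UNIV :: bool set"] finite_subset by auto
qed

lemma bounded_words_empty: "n < Z \<Longrightarrow> bounded_words Z n = {}"
  unfolding bounded_words_def using count_False_le_word_lis le_trans not_le by blast

lemma bounded_words_Cons_cases:
  "bounded_words Z n = (if Z = 0 then {[]} else {})
     \<union> (if 0 < n then Cons True ` bounded_words Z (n - 1) else {})
     \<union> (if 0 < Z \<and> Z \<le> n then Cons False ` bounded_words (Z - 1) n else {})"
proof (rule set_eqI)
  fix w
  show "w \<in> bounded_words Z n \<longleftrightarrow> w \<in> (if Z = 0 then {[]} else {})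
     \<union> (if 0 < n then Cons True ` bounded_words Z (n - 1) else {})
     \<union> (if 0 < Z \<and> Z \<le> n then Cons False ` bounded_words (Z - 1) n else {})"
    by (cases w rule: word_lis.cases) (auto simp: bounded_words_def)
qed

lemma sum_bounded_words:
  "(\<Sum>w\<in>bounded_words Z n. f w) = (if Z = 0 then f [] else 0)
     + (if 0 < n then (\<Sum>w\<in>bounded_words Z (n - 1). f (True # w)) else 0)
     + (if 0 < Z \<and> Z \<le> n then (\<Sum>w\<in>bounded_words (Z - 1) n. f (False # w)) else 0)"
proof -
  let ?A = "(if Z = 0 then {[]} else {}) :: bool list set"
  let ?B = "if 0 < n then Cons True ` bounded_words Z (n - 1) else {}"
  let ?C = "if 0 < Z \<and> Z \<le> n then Cons False ` bounded_words (Z - 1) n else {}"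
  have fin: "finite ?A" "finite ?B" "finite ?C"
    using finite_bounded_words by auto
  have "(\<Sum>w\<in>bounded_words Z n. f w) = sum f (?A \<union> ?B \<union> ?C)"
    by (subst bounded_words_Cons_cases) (rule refl)
  also have "\<dots> = sum f (?A \<union> ?B) + sum f ?C"
    by (rule sum.union_disjoint) (use fin in auto)
  also have "sum f (?A \<union> ?B) = sum f ?A + sum f ?B"
    by (rule sum.union_disjoint) (use fin in auto)
  also have "sum f ?B = (if 0 < n then (\<Sum>w\<in>bounded_words Z (n - 1). f (True # w)) else 0)"
    by (simp add: sum.reindex)
  also have "sum f ?C = (if 0 < Z \<and> Z \<le> n then (\<Sum>w\<in>bounded_words (Z - 1) n. f (False # w)) else 0)"
    by (simp add: sum.reindex)
  finally show ?thesis by simp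
qed

definition sign_sum :: "nat \<Rightarrow> nat \<Rightarrow> int" where
  "sign_sum Z n = (\<Sum>w\<in>bounded_words Z n. (-1) ^ word_inversions w)"

text \<open>Prepending \<open>False\<close> adds \<open>count_list w True\<close> inversions, so the sign sum alone does
  not satisfy a recurrence; together with this twisted sum it does.\<close>

definition twisted_sign_sum :: "nat \<Rightarrow> nat \<Rightarrow> int" where
  "twisted_sign_sum Z n = (\<Sum>w\<in>bounded_words Z n. (-1) ^ (word_inversions w + count_list w True))"

lemma sign_sum_rec:
  "sign_sum Z n = (if Z = 0 then 1 else 0) + (if 0 < n then sign_sum Z (n - 1) else 0)
     + (if 0 < Z \<and> Z \<le> n then twisted_sign_sum (Z - 1) n else 0)"
  unfolding sign_sum_def twisted_sign_sum_def by (subst sum_bounded_words) (simp add: add.commute)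

lemma twisted_sign_sum_rec:
  "twisted_sign_sum Z n = (if Z = 0 then 1 else 0) - (if 0 < n then twisted_sign_sum Z (n - 1) else 0)
     + (if 0 < Z \<and> Z \<le> n then sign_sum (Z - 1) n else 0)"
proof -
  have "(-1::int) ^ (a + b + a) = (-1) ^ b" for a b :: nat
    by (simp add: power_add flip: power_mult_distrib)
  then show ?thesis
    unfolding sign_sum_def twisted_sign_sum_def by (subst sum_bounded_words) (simp add: sum_negf)
qed

lemma card_bounded_words_rec:
  "int (card (bounded_words Z n)) = (if Z = 0 then 1 else 0)
     + (if 0 < n then int (card (bounded_words Z (n - 1))) else 0)
     + (if 0 < Z \<and> Z \<le> n then int (card (bounded_words (Z - 1) n)) else 0)"
  using sum_bounded_words[of "\<lambda>_. 1 :: int" Z n] by simp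

lemma bounded_word_sums_eq_formulas:
  "Z \<le> n \<Longrightarrow> sign_sum Z n = sign_formula Z n \<and> twisted_sign_sum Z n = twisted_formula Z n
     \<and> int (card (bounded_words Z n)) = count_formula Z n"
proof (induction "Z + n" arbitrary: Z n rule: less_induct)
  case less
  have shorter:
    "(if 0 < n then sign_sum Z (n - 1) else 0) = (if 0 < n \<and> Z < n then sign_formula Z (n - 1) else 0)
     \<and> (if 0 < n then twisted_sign_sum Z (n - 1) else 0)
         = (if 0 < n \<and> Z < n then twisted_formula Z (n - 1) else 0)
     \<and> (if 0 < n then int (card (bounded_words Z (n - 1))) else 0)
         = (if 0 < n \<and> Z < n then count_formula Z (n - 1) else 0)"
  proof (cases "0 < n \<and> Z < n")
    case True
    with less show ?thesis by auto
  next
    case False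
    with less.prems bounded_words_empty[of "n - 1" Z] show ?thesis
      by (auto simp: sign_sum_def twisted_sign_sum_def)
  qed
  have fewer_zeros:
    "(if 0 < Z \<and> Z \<le> n then sign_sum (Z - 1) n else 0) = (if 0 < Z then sign_formula (Z - 1) n else 0)
     \<and> (if 0 < Z \<and> Z \<le> n then twisted_sign_sum (Z - 1) n else 0)
         = (if 0 < Z then twisted_formula (Z - 1) n else 0)
     \<and> (if 0 < Z \<and> Z \<le> n then int (card (bounded_words (Z - 1) n)) else 0)
         = (if 0 < Z then count_formula (Z - 1) n else 0)"
    using less by auto
  show ?case
    using formulas_rec[OF less.prems] count_formula_rec[OF less.prems]
    by (simp only: sign_sum_rec[of Z n] twisted_sign_sum_rec[of Z n] card_bounded_words_rec[of Z n]
        shorter fewer_zeros)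
qed

lemma card_odd_eq_sum_sign:
  assumes "finite A"
  shows "2 * int (card {x\<in>A. odd (f x)}) = int (card A) - (\<Sum>x\<in>A. (-1) ^ f x)"
  using assms
proof (induction rule: finite_induct)
  case (insert x A)
  then have "{y \<in> insert x A. odd (f y)} = (if odd (f x) then insert x {y\<in>A. odd (f y)} else {y\<in>A. odd (f y)})"
    by auto
  with insert show ?case by simp
qed simp

definition odd_words :: "nat \<Rightarrow> bool list set" where
  "odd_words n = {w. word_lis w \<le> n \<and> odd (word_inversions w)}"

lemma odd_words_eq_UN: "odd_words n = (\<Union>Z\<le>n. {w \<in> bounded_words Z n. odd (word_inversions w)})"
  unfolding odd_words_def bounded_words_def using count_False_le_word_lis by (auto intro: le_trans)

lemma card_odd_words:
  "finite (odd_words n) \<and>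
   2 * int (card (odd_words n)) = (\<Sum>Z\<le>n. count_formula Z n) - (\<Sum>Z\<le>n. sign_formula Z n)"
proof -
  let ?O = "\<lambda>Z. {w \<in> bounded_words Z n. odd (word_inversions w)}"
  have fin: "finite (?O Z)" for Z
    using finite_bounded_words by simp
  have "card (odd_words n) = (\<Sum>Z\<le>n. card (?O Z))"
    unfolding odd_words_eq_UN by (rule card_UN_disjoint) (use fin in \<open>auto simp: bounded_words_def\<close>)
  then have "2 * int (card (odd_words n)) = (\<Sum>Z\<le>n. 2 * int (card (?O Z)))"
    by (simp add: sum_distrib_left)
  also have "\<dots> = (\<Sum>Z\<le>n. int (card (bounded_words Z n)) - sign_sum Z n)"
    unfolding sign_sum_def using card_odd_eq_sum_sign[OF finite_bounded_words] by simp
  also have "\<dots> = (\<Sum>Z\<le>n. count_formula Z n - sign_formula Z n)"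
    using bounded_word_sums_eq_formulas by (intro sum.cong) auto
  finally show ?thesis
    using fin by (simp add: odd_words_eq_UN sum_subtractf)
qed

lemma card_odd_words_catalan:
  assumes "1 \<le> k"
  shows "of_nat (card (odd_words (k - 1))) =
    (if odd k
     then catalan (k + 1) / 2 - 2 * catalan ((k + 1) div 2) + 1
     else (catalan (k + 1) - catalan (k div 2)) / 2 - catalan ((k + 2) div 2) + 1)"
proof -
  define n where "n = k - 1"
  have k: "k = Suc n"
    using assms by (simp add: n_def)
  have card: "2 * int (card (odd_words n))
      = ballot (Suc (Suc n)) (Suc (Suc n)) - 1 - (\<Sum>Z\<le>n. sign_formula Z n)"
    using card_odd_words[of n] sum_count_formula[of n] by simp
  show ?thesis
  proof (cases "odd k")
    case True
    then obtain l where l: "n = 2*l"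
      using k by (metis evenE even_Suc)
    have "2 * of_int (int (card (odd_words n)))
        = (of_int (ballot (Suc (Suc n)) (Suc (Suc n)) - 1 - (4 * ballot (Suc l) (Suc l) - 3)) :: rat)"
      using card sum_sign_formula_even[of l] l by simp
    moreover have "(k + 1) div 2 = Suc l"
      using k l by simp
    ultimately show ?thesis
      using k True by (simp add: catalan_eq_ballot n_def [symmetric])
  next
    case False
    then obtain l where l: "n = Suc (2*l)"
      using k by (metis oddE even_Suc Suc_eq_plus1)
    have "2 * of_int (int (card (odd_words n))) = (of_int (ballot (Suc (Suc n)) (Suc (Suc n)) - 1
        - (ballot (Suc l) (Suc l) + 2 * ballot (Suc (Suc l)) (Suc (Suc l)) - 3)) :: rat)"
      using card sum_sign_formula_odd[of l] l by simp
    moreover have "k div 2 = Suc l" "(k + 2) div 2 = Suc (Suc l)"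
      using k l by simp_all
    ultimately show ?thesis
      using k False by (simp add: catalan_eq_ballot n_def [symmetric] field_simps)
  qed
qed

section \<open>Concatenations of two increasing lists\<close>

lemma nth_append_sorted_less:
  assumes "sorted_wrt (<) xs" "sorted_wrt (<) ys" "i < j" "j < length (xs @ ys)"
    and "j < length xs \<or> length xs \<le> i"
  shows "(xs @ ys) ! i < (xs @ ys) ! j"
  using assms(5)
proof
  assume "j < length xs"
  with assms show ?thesis
    by (simp add: nth_append sorted_wrt_nth_less)
next
  assume "length xs \<le> i"
  with assms show ?thesis
    using sorted_wrt_nth_less[OF assms(2), of "i - length xs" "j - length xs"] by (simp add: nth_append)
qed

lemma descents_append_sorted:
  assumes "sorted_wrt (<) xs" "sorted_wrt (<) ys"
  shows "descents (xs @ ys) \<subseteq> {length xs - 1}"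
proof
  fix i assume "i \<in> descents (xs @ ys)"
  then have "Suc i < length (xs @ ys)" "\<not> (xs @ ys) ! i < (xs @ ys) ! Suc i"
    by (auto simp: descents_def)
  with nth_append_sorted_less[OF assms, of i "Suc i"] show "i \<in> {length xs - 1}"
    by fastforce
qed

lemma grassmannian_append_sorted:
  assumes "sorted_wrt (<) xs" "sorted_wrt (<) ys"
  shows "grassmannian (xs @ ys)"
proof -
  have "card (descents (xs @ ys)) \<le> card {length xs - 1}"
    using descents_append_sorted[OF assms] by (intro card_mono) auto
  then show ?thesis by (simp add: grassmannian_def)
qed

lemma sorted_wrt_less_if_no_descents:
  assumes "distinct p" "descents p = {}"
  shows "sorted_wrt (<) p"
proof (subst sorted_wrt_iff_nth_Suc_transp[OF transp_on_less], intro allI impI)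
  fix i assume i: "Suc i < length p"
  with assms(1) have "p ! i \<noteq> p ! Suc i"
    by (simp add: nth_eq_iff_index_eq)
  with i assms(2) show "p ! i < p ! Suc i"
    by (auto simp: descents_def)
qed

lemma grassmannian_split:
  assumes "distinct p" "grassmannian p"
  obtains xs ys where "p = xs @ ys" "sorted_wrt (<) xs" "sorted_wrt (<) ys"
proof -
  have "finite (descents p)"
    by (rule finite_subset[of _ "{..<length p}"]) (auto simp: descents_def)
  with assms(2) consider "descents p = {}" | d where "descents p = {d}"
    unfolding grassmannian_def by (metis card_0_eq card_1_singletonE le_Suc_eq le_zero_eq One_nat_def)
  then show ?thesis
  proof cases
    case 1
    then show ?thesis
      using that[of p "[]"] sorted_wrt_less_if_no_descents[OF assms(1)] by simp
  next
    case (2 d)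
    have "descents (take (Suc d) p) \<subseteq> descents p - {d}"
      and "(+) (Suc d) ` descents (drop (Suc d) p) \<subseteq> descents p - {d}"
      by (auto simp: descents_def)
    then have "descents (take (Suc d) p) = {}" "descents (drop (Suc d) p) = {}"
      using 2 by auto
    then show ?thesis
      using that[of "take (Suc d) p" "drop (Suc d) p"] assms(1)
      by (simp add: sorted_wrt_less_if_no_descents)
  qed
qed

definition cross_inversions :: "nat set \<Rightarrow> nat set \<Rightarrow> (nat \<times> nat) set" where
  "cross_inversions A B = {(a, b). a \<in> A \<and> b \<in> B \<and> b < a}"

lemma inversions_append_sorted_split:
  assumes "sorted_wrt (<) xs" "sorted_wrt (<) ys" "(i, j) \<in> inversions (xs @ ys)"
  shows "i < length xs \<and> length xs \<le> j"
  using assms(3) nth_append_sorted_less[OF assms(1,2), of i j]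
  by (fastforce simp: inversions_def)

lemma card_inversions_append_sorted:
  assumes sorted: "sorted_wrt (<) xs" "sorted_wrt (<) ys" and disj: "set xs \<inter> set ys = {}"
  shows "card (inversions (xs @ ys)) = card (cross_inversions (set xs) (set ys))"
proof -
  let ?p = "xs @ ys"
  have "distinct ?p"
    using sorted disj by (auto simp: strict_sorted_iff)
  have "bij_betw (\<lambda>(i, j). (?p ! i, ?p ! j)) (inversions ?p) (cross_inversions (set xs) (set ys))"
  proof (rule bij_betwI')
    fix x y assume "x \<in> inversions ?p" "y \<in> inversions ?p"
    with \<open>distinct ?p\<close> show "((\<lambda>(i, j). (?p ! i, ?p ! j)) x = (\<lambda>(i, j). (?p ! i, ?p ! j)) y) = (x = y)"
      by (auto simp: inversions_def nth_eq_iff_index_eq)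
  next
    fix x assume x: "x \<in> inversions ?p"
    obtain i j where [simp]: "x = (i, j)"
      by (cases x)
    have "i < length xs \<and> length xs \<le> j"
      using inversions_append_sorted_split[OF sorted] x by simp
    with x show "(\<lambda>(i, j). (?p ! i, ?p ! j)) x \<in> cross_inversions (set xs) (set ys)"
      by (auto simp: inversions_def cross_inversions_def nth_append)
  next
    fix y assume "y \<in> cross_inversions (set xs) (set ys)"
    then obtain a b where y: "y = (a, b)" "a \<in> set xs" "b \<in> set ys" "b < a"
      by (auto simp: cross_inversions_def)
    obtain i where i: "i < length xs" "xs ! i = a"
      using y by (auto simp: in_set_conv_nth)
    obtain j where j: "j < length ys" "ys ! j = b"
      using y by (auto simp: in_set_conv_nth)
    have "(i, length xs + j) \<in> inversions ?p"
      using i j y by (auto simp: inversions_def nth_append)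
    moreover have "y = (\<lambda>(i, j). (?p ! i, ?p ! j)) (i, length xs + j)"
      using i j y by (simp add: nth_append)
    ultimately show "\<exists>x\<in>inversions ?p. y = (\<lambda>(i, j). (?p ! i, ?p ! j)) x"
      by blast
  qed
  then show ?thesis
    by (rule bij_betw_same_card)
qed

definition cut_length :: "nat set \<Rightarrow> nat set \<Rightarrow> nat \<Rightarrow> nat" where
  "cut_length A B t = card {a\<in>A. a < t} + card {b\<in>B. t \<le> b}"

lemma increasing_subseq_le_cut_length:
  assumes "finite A" "finite B"
    and "subseq zs (sorted_list_of_set A @ sorted_list_of_set B)" "sorted_wrt (<) zs"
  shows "\<exists>t. length zs \<le> cut_length A B t"
proof -
  obtain z1 z2 where zs: "zs = z1 @ z2"
    and "subseq z1 (sorted_list_of_set A)" "subseq z2 (sorted_list_of_set B)"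
    using assms(3) by (rule subseq_appendE)
  then have sub: "set z1 \<subseteq> A" "set z2 \<subseteq> B"
    using assms(1,2) by (auto elim: list_emb_set)
  have sorted: "sorted_wrt (<) z1" "sorted_wrt (<) z2" and less: "\<forall>x\<in>set z1. \<forall>y\<in>set z2. x < y"
    using assms(4) zs by (auto simp: sorted_wrt_append)
  define t where "t = (if z1 = [] then 0 else Suc (Max (set z1)))"
  have "set z1 \<subseteq> {a\<in>A. a < t}"
    using sub by (auto simp: t_def le_imp_less_Suc)
  moreover have "set z2 \<subseteq> {b\<in>B. t \<le> b}"
    using sub less by (auto simp: t_def Suc_le_eq)
  ultimately have "card (set z1) \<le> card {a\<in>A. a < t}" "card (set z2) \<le> card {b\<in>B. t \<le> b}"
    using assms(1,2) by (auto intro: card_mono)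
  moreover have "length z1 = card (set z1)" "length z2 = card (set z2)"
    using sorted by (simp_all add: strict_sorted_iff distinct_card)
  ultimately have "length zs \<le> cut_length A B t"
    using zs by (simp add: cut_length_def)
  then show ?thesis ..
qed

lemma increasing_subseq_cut_length:
  assumes "finite A" "finite B"
  shows "\<exists>zs. subseq zs (sorted_list_of_set A @ sorted_list_of_set B)
    \<and> length zs = cut_length A B t \<and> sorted_wrt (<) zs"
proof -
  let ?A = "{a\<in>A. a < t}" and ?B = "{b\<in>B. t \<le> b}"
  have fin: "finite ?A" "finite ?B"
    using assms by auto
  have "subseq (sorted_list_of_set ?A) (sorted_list_of_set A)"
    "subseq (sorted_list_of_set ?B) (sorted_list_of_set B)"
    using fin assms by (auto intro!: sorted_subset_imp_subseq)
  then have "subseq (sorted_list_of_set ?A @ sorted_list_of_set ?B) (sorted_list_of_set A @ sorted_list_of_set B)"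
    by (rule list_emb_append_mono)
  moreover have "sorted_wrt (<) (sorted_list_of_set ?A @ sorted_list_of_set ?B)"
    using fin by (auto simp: sorted_wrt_append intro: less_le_trans)
  moreover have "length (sorted_list_of_set ?A @ sorted_list_of_set ?B) = cut_length A B t"
    by (simp add: cut_length_def)
  ultimately show ?thesis
    by blast
qed

lemma increasing_subseq_append_sorted_iff:
  assumes "finite A" "finite B"
  shows "(\<exists>zs. subseq zs (sorted_list_of_set A @ sorted_list_of_set B) \<and> length zs = k \<and> sorted_wrt (<) zs)
    \<longleftrightarrow> (\<exists>t. k \<le> cut_length A B t)"
proof
  assume "\<exists>zs. subseq zs (sorted_list_of_set A @ sorted_list_of_set B) \<and> length zs = k \<and> sorted_wrt (<) zs"
  then show "\<exists>t. k \<le> cut_length A B t"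
    using increasing_subseq_le_cut_length[OF assms] by blast
next
  assume "\<exists>t. k \<le> cut_length A B t"
  then obtain t zs where "k \<le> length zs" "sorted_wrt (<) zs"
    and "subseq zs (sorted_list_of_set A @ sorted_list_of_set B)"
    using increasing_subseq_cut_length[OF assms] by metis
  moreover have "subseq (take k zs) zs"
    by (rule prefix_imp_subseq) (rule take_is_prefix)
  ultimately show "\<exists>zs. subseq zs (sorted_list_of_set A @ sorted_list_of_set B) \<and> length zs = k \<and> sorted_wrt (<) zs"
    by (metis length_take min.absorb2 sorted_wrt_take subseq_order.order_trans)
qed

section \<open>Grassmannian permutations as binary words\<close>

definition positions :: "bool \<Rightarrow> nat \<Rightarrow> bool list \<Rightarrow> nat set" where
  "positions b i w = {j. i \<le> j \<and> j < i + length w \<and> w ! (j - i) = b}"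

lemma positions_Nil [simp]: "positions b i [] = {}"
  by (simp add: positions_def)

lemma positions_Cons:
  "positions b i (c # w) = (if c = b then insert i (positions b (Suc i) w) else positions b (Suc i) w)"
  by (auto simp: positions_def nth_Cons' Suc_diff_Suc not_less_eq_eq le_Suc_eq)

lemma finite_positions [simp]: "finite (positions b i w)"
  by (simp add: positions_def)

lemma positions_ge: "j \<in> positions b i w \<Longrightarrow> i \<le> j"
  by (simp add: positions_def)

lemma positions_True_False_disjoint: "positions True i w \<inter> positions False i w = {}"
  by (auto simp: positions_def)

lemma positions_True_False_Un: "positions True i w \<union> positions False i w = {i..<i + length w}"
  by (auto simp: positions_def)

lemma card_positions: "card (positions b i w) = count_list w b"
proof (induction w arbitrary: i)
  case (Cons c w)
  have "i \<notin> positions b (Suc i) w"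
    using positions_ge by fastforce
  with Cons show ?case
    by (simp add: positions_Cons)
qed simp

lemma card_cross_inversions_positions:
  "card (cross_inversions (positions True i w) (positions False i w)) = word_inversions w"
proof (induction w arbitrary: i)
  case Nil
  then show ?case by (simp add: cross_inversions_def)
next
  case (Cons c w)
  let ?C = "cross_inversions (positions True (Suc i) w) (positions False (Suc i) w)"
  show ?case
  proof (cases c)
    case True
    then have "cross_inversions (positions True i (c # w)) (positions False i (c # w)) = ?C"
      by (auto simp: cross_inversions_def positions_Cons dest: positions_ge)
    with Cons True show ?thesis by simp
  next
    case False
    have split: "cross_inversions (positions True i (False # w)) (positions False i (False # w))
        = ?C \<union> (\<lambda>a. (a, i)) ` positions True (Suc i) w"
      by (auto simp: cross_inversions_def positions_Cons dest: positions_ge)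
    have "finite ?C"
      by (rule finite_subset[of _ "positions True (Suc i) w \<times> positions False (Suc i) w"])
        (auto simp: cross_inversions_def)
    moreover have "?C \<inter> (\<lambda>a. (a, i)) ` positions True (Suc i) w = {}"
      by (auto simp: cross_inversions_def dest: positions_ge)
    moreover have "card ((\<lambda>a. (a, i)) ` positions True (Suc i) w) = count_list w True"
      by (simp add: card_image inj_on_def card_positions)
    ultimately show ?thesis
      using Cons False by (simp add: split card_Un_disjoint)
  qed
qed

definition grass_perm :: "bool list \<Rightarrow> nat list" where
  "grass_perm w = sorted_list_of_set (positions True 1 w) @ sorted_list_of_set (positions False 1 w)"

lemma length_grass_perm: "length (grass_perm w) = length w"
  by (simp add: grass_perm_def card_positions length_eq_count_True_False)

lemma is_perm_grass_perm: "is_perm (grass_perm w)"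
proof -
  have "distinct (grass_perm w)"
    using positions_True_False_disjoint[of 1 w] by (simp add: grass_perm_def)
  moreover have "set (grass_perm w) = {1..<1 + length w}"
    using positions_True_False_Un[of 1 w] by (simp add: grass_perm_def)
  moreover have "{1..<1 + length w} = {1..length (grass_perm w)}"
    by (simp add: length_grass_perm atLeastLessThanSuc_atLeastAtMost)
  ultimately show ?thesis
    by (simp add: is_perm_def)
qed

lemma grassmannian_grass_perm: "grassmannian (grass_perm w)"
  unfolding grass_perm_def by (rule grassmannian_append_sorted) auto

lemma card_inversions_grass_perm: "card (inversions (grass_perm w)) = word_inversions w"
  unfolding grass_perm_def using positions_True_False_disjoint[of 1 w]
  by (subst card_inversions_append_sorted) (auto simp: card_cross_inversions_positions)

abbreviation word_cut_length :: "nat \<Rightarrow> bool list \<Rightarrow> nat \<Rightarrow> nat" where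
  "word_cut_length i w \<equiv> cut_length (positions True i w) (positions False i w)"

lemma word_cut_length_below: "t \<le> i \<Longrightarrow> word_cut_length i w t = count_list w False"
proof -
  assume "t \<le> i"
  then have "{a \<in> positions True i w. a < t} = {}" "{b \<in> positions False i w. t \<le> b} = positions False i w"
    using positions_ge[of _ _ i w] by fastforce+
  then show ?thesis
    by (simp add: cut_length_def card_positions)
qed

lemma word_cut_length_Cons_True: "i < t \<Longrightarrow> word_cut_length i (True # w) t = Suc (word_cut_length (Suc i) w t)"
proof -
  assume "i < t"
  then have "{a \<in> positions True i (True # w). a < t} = insert i {a \<in> positions True (Suc i) w. a < t}"
    by (auto simp: positions_Cons)
  moreover have "i \<notin> positions True (Suc i) w"
    using positions_ge by fastforce
  ultimately show ?thesis
    by (simp add: cut_length_def positions_Cons)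
qed

lemma word_cut_length_Cons_False: "i < t \<Longrightarrow> word_cut_length i (False # w) t = word_cut_length (Suc i) w t"
proof -
  assume "i < t"
  then have "{b \<in> positions False i (False # w). t \<le> b} = {b \<in> positions False (Suc i) w. t \<le> b}"
    by (auto simp: positions_Cons)
  then show ?thesis
    by (simp add: cut_length_def positions_Cons)
qed

lemma word_cut_length_le_word_lis: "word_cut_length i w t \<le> word_lis w"
proof (induction w arbitrary: i rule: word_lis.induct)
  case (2 w)
  then show ?case
    using word_cut_length_below[of t i "True # w"] word_cut_length_Cons_True[of i t w]
      count_False_le_word_lis[of w]
    by (cases "t \<le> i") auto
next
  case (3 w)
  then show ?case
    using word_cut_length_below[of t i "False # w"] word_cut_length_Cons_False[of i t w]
    by (cases "t \<le> i") (auto simp: le_max_iff_disj)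
qed (simp add: cut_length_def)

lemma word_cut_length_attains_word_lis: "\<exists>t. word_cut_length i w t = word_lis w"
proof (induction w arbitrary: i rule: word_lis.induct)
  case 1
  then show ?case by (simp add: cut_length_def)
next
  case (2 w)
  then obtain t where t: "word_cut_length (Suc i) w t = word_lis w"
    by blast
  have "word_cut_length (Suc i) w (max t (Suc i)) = word_lis w"
    using t word_cut_length_below[of t "Suc i" w] word_cut_length_below[of "Suc i" "Suc i" w]
    by (cases "t \<le> Suc i") (auto simp: max_def)
  then have "word_cut_length i (True # w) (max t (Suc i)) = word_lis (True # w)"
    using word_cut_length_Cons_True[of i "max t (Suc i)" w] by simp
  then show ?case ..
next
  case (3 w)
  show ?case
  proof (cases "word_lis w \<le> Suc (count_list w False)")
    case True
    then have "word_cut_length i (False # w) i = word_lis (False # w)"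
      using word_cut_length_below[of i i "False # w"] by simp
    then show ?thesis ..
  next
    case False
    obtain t where t: "word_cut_length (Suc i) w t = word_lis w"
      using 3 by blast
    have "i < t"
      using False t word_cut_length_below[of t "Suc i" w] by (cases "i < t") auto
    then have "word_cut_length i (False # w) t = word_lis (False # w)"
      using False t word_cut_length_Cons_False[of i t w] by simp
    then show ?thesis ..
  qed
qed

lemma avoids_id_grass_perm_iff: "avoids_id k (grass_perm w) \<longleftrightarrow> word_lis w < k"
proof -
  have "(\<exists>t. k \<le> word_cut_length 1 w t) \<longleftrightarrow> k \<le> word_lis w"
    using word_cut_length_le_word_lis[of 1 w] word_cut_length_attains_word_lis[of 1 w] le_trans
    by metis
  then show ?thesis
    unfolding avoids_id_def grass_perm_def
    by (simp add: increasing_subseq_append_sorted_iff not_le)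
qed

lemma count_True_pos_if_word_inversions_pos: "0 < word_inversions w \<Longrightarrow> 0 < count_list w True"
  by (induction w rule: word_inversions.induct) auto

lemma descents_grass_perm:
  assumes "0 < word_inversions w"
  shows "descents (grass_perm w) = {count_list w True - 1}"
proof -
  have "descents (grass_perm w) \<subseteq> {count_list w True - 1}"
    using descents_append_sorted[of "sorted_list_of_set (positions True 1 w)"]
    by (simp add: grass_perm_def card_positions)
  moreover have "descents (grass_perm w) \<noteq> {}"
  proof
    assume "descents (grass_perm w) = {}"
    then have "sorted_wrt (<) (grass_perm w)"
      using is_perm_grass_perm by (auto simp: is_perm_def intro: sorted_wrt_less_if_no_descents)
    then have "inversions (grass_perm w) = {}"
      by (auto simp: inversions_def sorted_wrt_nth_less dest: sorted_wrt_nth_less)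
    with assms show False
      using card_inversions_grass_perm[of w] by simp
  qed
  ultimately show ?thesis
    by blast
qed

text \<open>Words without inversions all encode the identity; otherwise the unique descent of
  \<open>grass_perm w\<close> recovers the number of \<open>True\<close> letters, hence \<open>w\<close>.\<close>

lemma inj_on_grass_perm: "inj_on grass_perm {w. 0 < word_inversions w}"
proof (rule inj_onI)
  fix v w
  assume v: "v \<in> {w. 0 < word_inversions w}" and w: "w \<in> {w. 0 < word_inversions w}"
    and eq: "grass_perm v = grass_perm w"
  have "count_list v True = count_list w True"
    using descents_grass_perm[of v] descents_grass_perm[of w] eq v w
      count_True_pos_if_word_inversions_pos[of v] count_True_pos_if_word_inversions_pos[of w]
    by simp
  moreover have "positions True 1 u = set (take (count_list u True) (grass_perm u))" for u
    by (simp add: grass_perm_def card_positions)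
  ultimately have "positions True 1 v = positions True 1 w"
    using eq by simp
  moreover have "length v = length w"
    using eq length_grass_perm by metis
  moreover have "u ! j \<longleftrightarrow> Suc j \<in> positions True 1 u" if "j < length u" for u j
    using that by (simp add: positions_def)
  ultimately show "v = w"
    by (metis nth_equalityI)
qed

lemma grass_perm_of_split:
  assumes perm: "is_perm (xs @ ys)" and sorted: "sorted_wrt (<) xs" "sorted_wrt (<) ys"
  shows "grass_perm (map (\<lambda>i. Suc i \<in> set xs) [0..<length (xs @ ys)]) = xs @ ys"
proof -
  define w where "w = map (\<lambda>i. Suc i \<in> set xs) [0..<length (xs @ ys)]"
  have disj: "set xs \<inter> set ys = {}" and un: "set xs \<union> set ys = {1..<1 + length w}"
    using perm by (auto simp: is_perm_def w_def atLeastLessThanSuc_atLeastAtMost)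
  then have xs: "set xs \<subseteq> {1..<1 + length w}"
    by blast
  have "w ! (j - 1) \<longleftrightarrow> j \<in> set xs" if "1 \<le> j" "j < 1 + length w" for j
    using that by (cases j) (simp_all add: w_def)
  with xs have "positions True 1 w = set xs"
    by (auto simp: positions_def)
  moreover have "positions False 1 w = set ys"
    using positions_True_False_Un[of 1 w] positions_True_False_disjoint[of 1 w] disj un
      \<open>positions True 1 w = set xs\<close> by blast
  moreover have "sorted_list_of_set (set zs) = zs" if "sorted_wrt (<) zs" for zs :: "nat list"
    using that by (simp add: sorted_list_of_set_sort_remdups strict_sorted_iff distinct_remdups_id sorted_sort_id)
  ultimately show ?thesis
    using sorted by (simp add: grass_perm_def w_def)
qed

lemma grassmannian_perm_eq_grass_perm:
  assumes "is_perm p" "grassmannian p"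
  obtains w where "grass_perm w = p"
proof -
  obtain xs ys where "p = xs @ ys" "sorted_wrt (<) xs" "sorted_wrt (<) ys"
    using assms grassmannian_split by (auto simp: is_perm_def)
  with assms(1) show ?thesis
    using that grass_perm_of_split by blast
qed

theorem corollary4p6:
  fixes k :: nat
  assumes "k \<ge> 1"
  defines "S \<equiv> {p. is_perm p \<and> grassmannian p \<and> odd_perm p \<and> avoids_id k p}"
  shows "finite S \<and>
    of_nat (card S) =
      (if odd k
       then catalan (k + 1) / 2 - 2 * catalan ((k + 1) div 2) + 1
       else (catalan (k + 1) - catalan (k div 2)) / 2 - catalan ((k + 2) div 2) + 1)"
proof -
  have "S = grass_perm ` odd_words (k - 1)"
  proof (intro equalityI subsetI)
    fix p assume "p \<in> S"
    then have p: "is_perm p" "grassmannian p" "odd_perm p" "avoids_id k p"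
      by (auto simp: S_def)
    obtain w where "grass_perm w = p"
      using grassmannian_perm_eq_grass_perm[OF p(1,2)] .
    with p assms(1) show "p \<in> grass_perm ` odd_words (k - 1)"
      by (auto simp: odd_words_def odd_perm_def card_inversions_grass_perm avoids_id_grass_perm_iff)
  next
    fix p assume "p \<in> grass_perm ` odd_words (k - 1)"
    with assms(1) show "p \<in> S"
      by (auto simp: S_def odd_words_def odd_perm_def is_perm_grass_perm grassmannian_grass_perm
          card_inversions_grass_perm avoids_id_grass_perm_iff)
  qed
  moreover have "inj_on grass_perm (odd_words (k - 1))"
    by (rule inj_on_subset[OF inj_on_grass_perm]) (auto simp: odd_words_def odd_pos)
  ultimately show ?thesis
    using card_odd_words[of "k - 1"] card_odd_words_catalan[OF assms(1)] by (simp add: card_image)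
qed

end
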